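(* Let $(S,\omega)$ be a real symplectic vector space with positive polarization $E$ and associated complex structure $j$. For every unitary $h\in U(E)$ such that $h-\mathrm{id}$ is invertible, $$ {\det}^{1/2}\big(\tfrac12\mathrm{id}+iA(\iota(h))\big)=\frac{1}{\det(\mathrm{id}-h^{-1})}.$$
   Context: A positive polarization of $S$ is a Lagrangian subspace $E\subset S\otimes\mathbb C$ with $\frac1i\omega(x,\bar x)>0$ for all nonzero $x\in E$; $E$ carries the Hermitian product $(x,y)\mapsto\frac1i\omega(x,\bar y)$ and $U(E)$ is its unitary group. Let $j$ be the complex structure on $S$ with $E=\ker(j-i\,\mathrm{id})\subset S\otimes\mathbb C$; $\mathrm{sym}(S,j)$ is the space of endomorphisms of $S$ symmetric for the scalar product $\omega(X,jY)$; for $A\in\mathrm{sym}(S,j)$, ${\det}^{1/2}(\tfrac12\mathrm{id}+iA)$ is the square root of $\det(\tfrac12\mathrm{id}+iA)$ depending continuously on $A$ and positive at $A=0$. For $g\in\mathrm{Sp}(S)$ with $\mathrm{id}-g$ invertible, $A(g):=\tfrac12(\mathrm{id}+g)(\mathrm{id}-g)^{-1}j\in\mathrm{sym}(S,j)$. The map $\iota:U(E)\to\mathrm{Sp}(S)$ sends $h$ to the linear symplectomorphism $g$ of $S$ whose complexification acts as $h$ on $E$ and as $\bar h$ on $\overline E$ (its image is the set of elements commuting with $j$). *)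

theory Defs
  imports "HOL-Analysis.Analysis"
begin

text \<open>The real symplectic vector space S is modelled as real^'n (any finite-dimensional
real vector space is isomorphic to such a space); its complexification S \<otimes> C is complex^'n,
with the real vectors embedded componentwise.\<close>

definition vconj :: "complex^'n \<Rightarrow> complex^'n" where
  "vconj x = (\<chi> i. cnj (x $ i))"

definition cmat :: "real^'n^'m \<Rightarrow> complex^'n^'m" where
  "cmat A = (\<chi> i k. complex_of_real (A $ i $ k))"

definition omegaC :: "(real^'n \<Rightarrow> real^'n \<Rightarrow> real) \<Rightarrow> complex^'n \<Rightarrow> complex^'n \<Rightarrow> complex" where
  "omegaC \<omega> x y = (\<Sum>i\<in>UNIV. \<Sum>k\<in>UNIV. x $ i * y $ k * complex_of_real (\<omega> (axis i 1) (axis k 1)))"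

definition symplectic_form :: "(real^'n \<Rightarrow> real^'n \<Rightarrow> real) \<Rightarrow> bool" where
  "symplectic_form \<omega> \<longleftrightarrow> bilinear \<omega> \<and> (\<forall>x y. \<omega> x y = - \<omega> y x)
     \<and> (\<forall>x. (\<forall>y. \<omega> x y = 0) \<longrightarrow> x = 0)"

definition herm :: "(real^'n \<Rightarrow> real^'n \<Rightarrow> real) \<Rightarrow> complex^'n \<Rightarrow> complex^'n \<Rightarrow> complex" where
  "herm \<omega> x y = omegaC \<omega> x (vconj y) / \<i>"

definition positive_polarization :: "(real^'n \<Rightarrow> real^'n \<Rightarrow> real) \<Rightarrow> (complex^'n) set \<Rightarrow> bool" where
  "positive_polarization \<omega> E \<longleftrightarrow>
     subspace E \<and> (\<forall>c x. x \<in> E \<longrightarrow> c *s x \<in> E)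
     \<and> E = {x. \<forall>y\<in>E. omegaC \<omega> x y = 0}
     \<and> (\<forall>x\<in>E. x \<noteq> 0 \<longrightarrow> herm \<omega> x x \<in> \<real> \<and> 0 < Re (herm \<omega> x x))"

definition associated_cx_structure :: "(complex^'n) set \<Rightarrow> real^'n^'n \<Rightarrow> bool" where
  "associated_cx_structure E j \<longleftrightarrow> j ** j = - mat 1 \<and> E = {x. cmat j *v x = \<i> *s x}"

definition unitary_on :: "(real^'n \<Rightarrow> real^'n \<Rightarrow> real) \<Rightarrow> (complex^'n) set
    \<Rightarrow> (complex^'n \<Rightarrow> complex^'n) \<Rightarrow> bool" where
  "unitary_on \<omega> E h \<longleftrightarrow> bij_betw h E E
     \<and> (\<forall>x\<in>E. \<forall>y\<in>E. h (x + y) = h x + h y)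
     \<and> (\<forall>c. \<forall>x\<in>E. h (c *s x) = c *s h x)
     \<and> (\<forall>x\<in>E. \<forall>y\<in>E. herm \<omega> (h x) (h y) = herm \<omega> x y)"

definition iota :: "(complex^'n) set \<Rightarrow> (complex^'n \<Rightarrow> complex^'n) \<Rightarrow> real^'n^'n" where
  "iota E h = (THE g. (\<forall>x\<in>E. cmat g *v x = h x) \<and> (\<forall>x\<in>E. cmat g *v vconj x = vconj (h x)))"

text \<open>Determinant of a complex-linear endomorphism f of E: the determinant of its extension
by the identity on the complement conj E (S \<otimes> C = E \<oplus> conj E).\<close>
definition det_on :: "(complex^'n) set \<Rightarrow> (complex^'n \<Rightarrow> complex^'n) \<Rightarrow> complex" where
  "det_on E f = det (THE M :: complex^'n^'n.
      (\<forall>x\<in>E. M *v x = f x) \<and> (\<forall>x\<in>E. M *v vconj x = vconj x))"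

definition sym_SJ :: "(real^'n \<Rightarrow> real^'n \<Rightarrow> real) \<Rightarrow> real^'n^'n \<Rightarrow> (real^'n^'n) set" where
  "sym_SJ \<omega> j = {A. \<forall>X Y. \<omega> (A *v X) (j *v Y) = \<omega> X (j *v (A *v Y))}"

definition half_plus_iA :: "real^'n^'n \<Rightarrow> complex^'n^'n" where
  "half_plus_iA A = (\<chi> i k. (if i = k then 1/2 else 0) + \<i> * complex_of_real (A $ i $ k))"

text \<open>det^{1/2}(1/2 id + iA): the continuous square root on sym(S,j), positive at A = 0
(extended by 0 outside sym(S,j) to make the description unique).\<close>
definition sqrt_det :: "(real^'n \<Rightarrow> real^'n \<Rightarrow> real) \<Rightarrow> real^'n^'n \<Rightarrow> real^'n^'n \<Rightarrow> complex" where
  "sqrt_det \<omega> j = (THE f. continuous_on (sym_SJ \<omega> j) f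
      \<and> (\<forall>B\<in>sym_SJ \<omega> j. (f B)^2 = det (half_plus_iA B))
      \<and> f 0 \<in> \<real> \<and> 0 < Re (f 0)
      \<and> (\<forall>B. B \<notin> sym_SJ \<omega> j \<longrightarrow> f B = 0))"

definition A_of :: "real^'n^'n \<Rightarrow> real^'n^'n \<Rightarrow> real^'n^'n" where
  "A_of j g = (1/2) *\<^sub>R ((mat 1 + g) ** matrix_inv (mat 1 - g) ** j)"

end

theory Submission
  imports Defs
begin

(*  E = ker(J - i) and its conjugate F = ker(J + i) are complementary, with projections
    PE = (1 - iJ)/2 and PF = (1 + iJ)/2.  The proof has four steps.
    (1) Lagrangian-ness and positivity of E say exactly that j preserves \<omega> and that
        \<gamma>(X,Y) = \<omega>(X, jY) is a positive definite inner product on S.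
    (2) If a complex matrix P commutes with J and its \<gamma>-adjoint is its entrywise conjugate,
        then det P = det\<^sub>E(P)^2, where det\<^sub>E(P) = det(P PE + PF) is the determinant of P|E.
    (3) By positivity of \<gamma>, 1/2 + iB is invertible for all B in sym(S,j); sym(S,j) is a vector
        space, so det^{1/2} exists and is unique.  For B in sym(S,j) commuting with j, the map
        t \<mapsto> det\<^sub>E(1/2 + itB) is a continuous non-vanishing square root of det(1/2 + itB) on
        [0,1], positive at t = 0, hence it agrees with det^{1/2}(1/2 + itB) by connectedness.
    (4) g = iota(h) exists, commutes with j, preserves \<omega>, and 1 - g is invertible; hence
        A = A(g) lies in sym(S,j) and commutes with j, and (1/2 + iA)(1 - g\<^sup>-\<^sup>1) = 1 on E. *)

section \<open>Complex matrices with real structure\<close>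

definition cvec :: "real^'n \<Rightarrow> complex^'n" where
  "cvec X = (\<chi> i. complex_of_real (X$i))"

definition mconj :: "complex^'n^'m \<Rightarrow> complex^'n^'m" where
  "mconj M = (\<chi> i k. cnj (M$i$k))"

lemma cvec_inj: "cvec X = cvec Y \<Longrightarrow> X = Y"
  by (simp add: cvec_def vec_eq_iff)

lemma cvec_0 [simp]: "cvec 0 = 0"
  by (simp add: cvec_def vec_eq_iff)

lemma cvec_uminus: "cvec (- X) = - cvec X"
  by (simp add: cvec_def vec_eq_iff)

lemma cmat_mult: "cmat (A ** B) = cmat A ** cmat B"
  by (simp add: cmat_def matrix_matrix_mult_def vec_eq_iff)

lemma cmat_add: "cmat (A + B) = cmat A + cmat B"
  by (simp add: cmat_def vec_eq_iff)

lemma cmat_diff: "cmat (A - B) = cmat A - cmat B"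
  by (simp add: cmat_def vec_eq_iff)

lemma cmat_uminus: "cmat (- A) = - cmat A"
  by (simp add: cmat_def vec_eq_iff)

lemma cmat_mat: "cmat (mat c) = mat (complex_of_real c)"
  by (simp add: cmat_def mat_def vec_eq_iff)

lemma cmat_scaleR: "cmat (c *\<^sub>R A) = mat (complex_of_real c) ** cmat A"
  by (simp add: cmat_def mat_def matrix_matrix_mult_def vec_eq_iff if_distrib if_distribR
      sum.delta cong: if_cong)

lemma cmat_inj: "cmat A = cmat B \<Longrightarrow> A = B"
  by (simp add: cmat_def vec_eq_iff)

lemma cmat_cvec: "cmat A *v cvec X = cvec (A *v X)"
  by (simp add: cmat_def cvec_def matrix_vector_mult_def vec_eq_iff)

lemma transpose_cmat: "transpose (cmat A) = cmat (transpose A)"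
  by (simp add: cmat_def transpose_def vec_eq_iff)

lemma vconj_vconj [simp]: "vconj (vconj z) = z"
  by (simp add: vconj_def vec_eq_iff)

lemma vconj_zero [simp]: "vconj 0 = 0"
  by (simp add: vconj_def vec_eq_iff)

lemma vconj_cvec: "vconj (cvec X) = cvec X"
  by (simp add: vconj_def cvec_def vec_eq_iff)

lemma vconj_cmat: "vconj (cmat A *v z) = cmat A *v vconj z"
  by (simp add: cmat_def vconj_def matrix_vector_mult_def vec_eq_iff)

lemma vconj_add: "vconj (x + y) = vconj x + vconj y"
  by (simp add: vconj_def vec_eq_iff)

lemma vconj_diff: "vconj (x - y) = vconj x - vconj y"
  by (simp add: vconj_def vec_eq_iff)

lemma vconj_uminus: "vconj (- x) = - vconj x"
  by (simp add: vconj_def vec_eq_iff)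

lemma vconj_smult: "vconj (c *s x) = cnj c *s vconj x"
  by (simp add: vconj_def vec_eq_iff)

lemma mconj_mult: "mconj (A ** B) = mconj A ** mconj B"
  by (simp add: mconj_def matrix_matrix_mult_def vec_eq_iff)

lemma mconj_add: "mconj (A + B) = mconj A + mconj B"
  by (simp add: mconj_def vec_eq_iff)

lemma mconj_diff: "mconj (A - B) = mconj A - mconj B"
  by (simp add: mconj_def vec_eq_iff)

lemma mconj_mat: "mconj (mat c) = mat (cnj c)"
  by (simp add: mconj_def mat_def vec_eq_iff)

lemma mconj_cmat: "mconj (cmat A) = cmat A"
  by (simp add: mconj_def cmat_def vec_eq_iff)

lemma mconj_mconj [simp]: "mconj (mconj A) = A"
  by (simp add: mconj_def vec_eq_iff)

lemma mconj_vconj: "mconj M *v vconj z = vconj (M *v z)"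
  by (simp add: mconj_def vconj_def matrix_vector_mult_def vec_eq_iff)

lemma det_mconj: "det (mconj M) = cnj (det M)"
  by (simp add: det_def mconj_def)

lemma mat_smult: "mat c *v z = c *s z"
  by (simp add: mat_def matrix_vector_mult_def vec_eq_iff if_distrib if_distribR sum.delta
      cong: if_cong)

lemma mat_mult_left: "mat a ** (M::'a::semiring_1^'n^'m) = (\<chi> i k. a * M$i$k)"
  unfolding matrix_matrix_mult_def mat_def
  by (auto simp: vec_eq_iff if_distrib if_distribR sum.delta' cong: if_cong)

lemma mat_mult_right: "(M::'a::semiring_1^'n^'m) ** mat a = (\<chi> i k. M$i$k * a)"
  unfolding matrix_matrix_mult_def mat_def
  by (auto simp: vec_eq_iff if_distrib if_distribR sum.delta cong: if_cong)

lemma mat_comm: "mat c ** (M::'a::comm_semiring_1^'n^'n) = M ** mat c"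
  by (simp add: mat_mult_left mat_mult_right mult.commute)

lemma mat_uminus_mult: "mat (- c) ** (M::'a::ring_1^'n^'m) = - (mat c ** M)"
  by (simp add: mat_mult_left vec_eq_iff)

lemma uminus_mult_mat_uminus: "(- A) ** mat (- c) = mat c ** (A::'a::comm_ring_1^'n^'n)"
  by (simp add: mat_mult_left mat_mult_right vec_eq_iff)

lemma matrix_add_rdistrib: "(A + B) ** C = A ** C + B ** (C::'a::semiring_1^'p^'n)"
  by (simp add: matrix_matrix_mult_def vec_eq_iff sum.distrib distrib_right)

lemma matrix_diff_rdistrib: "(A - B) ** C = A ** C - B ** (C::'a::ring_1^'p^'n)"
  by (simp add: matrix_matrix_mult_def vec_eq_iff sum_subtractf left_diff_distrib)

lemma matrix_diff_ldistrib: "C ** (A - B) = C ** A - C ** (B::'a::ring_1^'p^'n)"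
  by (simp add: matrix_matrix_mult_def vec_eq_iff sum_subtractf right_diff_distrib)

lemma matrix_uminus_vector: "(- A) *v x = - (A *v (x::'a::ring_1^'m))"
  by (simp add: matrix_vector_mult_def vec_eq_iff sum_negf)

lemma matrix_vector_uminus: "A *v (- x) = - (A *v (x::'a::ring_1^'m))"
  by (simp add: matrix_vector_mult_def vec_eq_iff sum_negf)

lemma transpose_add: "transpose (A + B) = transpose A + transpose B"
  by (simp add: transpose_def vec_eq_iff)

lemma transpose_diff: "transpose (A - B) = transpose A - transpose B"
  by (simp add: transpose_def vec_eq_iff)

lemma matrix_mult_cancel: "B ** C = mat 1 \<Longrightarrow> (A ** B) ** (C ** D) = A ** (D::'a::semiring_1^'n^'n)"
  by (metis matrix_mul_assoc matrix_mul_lid)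

lemma matrix_vector_sum_axis: "A *v z = (\<Sum>k\<in>UNIV. z$k *s (A *v axis k (1::'a::comm_ring_1)))"
  by (simp add: vec_eq_iff matrix_vector_mult_def axis_def sum_component if_distrib if_distribR
      sum.delta mult.commute cong: if_cong)

lemma matrix_inv_props:
  "invertible (A::'a::semiring_1^'n^'n) \<Longrightarrow> A ** matrix_inv A = mat 1 \<and> matrix_inv A ** A = mat 1"
  unfolding invertible_def matrix_inv_def by (rule someI_ex)

lemma invertible_if_trivial_kernel:
  "(\<And>X. (A::'a::field^'n^'n) *v X = 0 \<Longrightarrow> X = 0) \<Longrightarrow> invertible A"
  using matrix_left_invertible_ker invertible_left_inverse by blast

lemma continuous_on_det:
  assumes "\<And>i k. continuous_on S (\<lambda>x. F x $ i $ k)"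
  shows "continuous_on S (\<lambda>x. det (F x :: complex^'n^'n))"
  unfolding det_def by (intro continuous_intros assms)

lemma bilinear_coordinates:
  fixes b :: "real^'n \<Rightarrow> real^'n \<Rightarrow> real"
  assumes "bilinear b"
  shows "b X Y = (\<Sum>i\<in>UNIV. \<Sum>k\<in>UNIV. X$i * Y$k * b (axis i 1) (axis k 1))"
proof -
  have "b X Y = b (\<Sum>i\<in>UNIV. X$i *\<^sub>R axis i 1) (\<Sum>k\<in>UNIV. Y$k *\<^sub>R axis k 1)"
    using basis_expansion[of X] basis_expansion[of Y] by (simp add: scalar_mult_eq_scaleR)
  also have "\<dots> = (\<Sum>(i,k)\<in>UNIV\<times>UNIV. b (X$i *\<^sub>R axis i 1) (Y$k *\<^sub>R axis k 1))"
    by (rule bilinear_sum[OF assms])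
  also have "\<dots> = (\<Sum>(i,k)\<in>UNIV\<times>UNIV. X$i * Y$k * b (axis i 1) (axis k 1))"
    using assms by (simp add: bilinear_lmul bilinear_rmul mult.assoc)
  finally show ?thesis
    by (simp add: sum.cartesian_product)
qed

lemma omegaC_cvec: "bilinear \<omega> \<Longrightarrow> omegaC \<omega> (cvec X) (cvec Y) = complex_of_real (\<omega> X Y)"
  by (simp add: omegaC_def cvec_def bilinear_coordinates[of \<omega> X Y])

lemma omegaC_add1: "omegaC \<omega> (x + y) z = omegaC \<omega> x z + omegaC \<omega> y z"
  by (simp add: omegaC_def distrib_right sum.distrib)

lemma omegaC_add2: "omegaC \<omega> z (x + y) = omegaC \<omega> z x + omegaC \<omega> z y"
  by (simp add: omegaC_def distrib_left distrib_right sum.distrib)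

lemma omegaC_smult1: "omegaC \<omega> (c *s x) z = c * omegaC \<omega> x z"
  by (simp add: omegaC_def sum_distrib_left mult.assoc)

lemma omegaC_smult2: "omegaC \<omega> z (c *s x) = c * omegaC \<omega> z x"
  by (simp add: omegaC_def sum_distrib_left mult_ac)

text \<open>A square root is pinned down by the sign of its
  real part; and two continuous square roots of a non-vanishing function on [0,1] that agree
  at 0 agree at 1 (their quotient is a continuous function into {1,-1}).\<close>

lemma square_eq_pos_re:
  fixes z w :: complex
  assumes "z ^ 2 = w ^ 2" "0 < Re z" "0 < Re w"
  shows "z = w"
  using assms by (auto simp: power2_eq_iff)

lemma square_roots_agree_on_path:
  fixes \<phi> \<psi> :: "real \<Rightarrow> complex"
  assumes c1: "continuous_on {0..1} \<phi>" and c2: "continuous_on {0..1} \<psi>"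
    and sq: "\<And>t. t \<in> {0..1} \<Longrightarrow> \<phi> t ^ 2 = \<psi> t ^ 2"
    and nz: "\<And>t. t \<in> {0..1} \<Longrightarrow> \<psi> t \<noteq> 0"
    and e0: "\<phi> 0 = \<psi> 0"
  shows "\<phi> 1 = \<psi> 1"
proof (rule ccontr)
  assume ne: "\<phi> 1 \<noteq> \<psi> 1"
  define r where "r t = Re (\<phi> t / \<psi> t)" for t
  have pm: "\<phi> t / \<psi> t = 1 \<or> \<phi> t / \<psi> t = -1" if "t \<in> {0..1}" for t
  proof -
    have "(\<phi> t / \<psi> t) ^ 2 = 1" using sq[OF that] nz[OF that] by (simp add: power_divide)
    then show ?thesis by (simp add: power2_eq_1_iff)
  qed
  have "continuous_on {0..1} r"
    unfolding r_def by (intro continuous_intros c1 c2) (use nz in auto)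
  moreover have "r 0 = 1" unfolding r_def using e0 nz[of 0] by simp
  moreover have "r 1 = -1" using pm[of 1] ne nz[of 1] unfolding r_def by auto
  ultimately obtain t where "0 \<le> t" "t \<le> 1" "r t = 0"
    using IVT2'[of r 1 0 0] by auto
  then show False using pm[of t] unfolding r_def by auto
qed

lemma square_root_of_positive_real:
  fixes z :: complex
  assumes "z ^ 2 = complex_of_real r" "0 < r"
  shows "z \<in> \<real>" "z \<noteq> 0"
proof -
  have a: "Re z * Re z - Im z * Im z = r" and b: "Re z * Im z = 0"
    using arg_cong[OF assms(1), of Re] arg_cong[OF assms(1), of Im] by (auto simp: power2_eq_square)
  have "Im z = 0"
  proof (rule ccontr)
    assume "Im z \<noteq> 0"
    then have "- (Im z * Im z) = r" using a b by simp
    then show False using assms(2) zero_le_square[of "Im z"] by linarith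
  qed
  then show "z \<in> \<real>" by (simp add: complex_is_Real_iff)
  show "z \<noteq> 0" using assms by auto
qed

section \<open>Steps (1)-(3): a symplectic space with a positive polarization\<close>

locale polarized_space =
  fixes \<omega> :: "real^'n \<Rightarrow> real^'n \<Rightarrow> real"
    and E :: "(complex^'n) set"
    and j :: "real^'n^'n"
  assumes symplectic: "symplectic_form \<omega>"
    and polarization: "positive_polarization \<omega> E"
    and cx_structure: "associated_cx_structure E j"
begin

definition J :: "complex^'n^'n" where "J = cmat j"

definition F :: "(complex^'n) set" where "F = {x. J *v x = - \<i> *s x}"
definition PE :: "complex^'n^'n" where "PE = mat (1/2) ** (mat 1 - mat \<i> ** J)"
definition PF :: "complex^'n^'n" where "PF = mat (1/2) ** (mat 1 + mat \<i> ** J)"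

lemma bilinear_omega: "bilinear \<omega>"
  using symplectic by (simp add: symplectic_form_def)

lemma omega_skew: "\<omega> X Y = - \<omega> Y X"
  using symplectic unfolding symplectic_form_def by blast

lemma omega_self: "\<omega> X X = 0"
  using omega_skew[of X X] by simp

lemma omega_algebra:
  "\<omega> (x + y) z = \<omega> x z + \<omega> y z" "\<omega> z (x + y) = \<omega> z x + \<omega> z y"
  "\<omega> (x - y) z = \<omega> x z - \<omega> y z" "\<omega> z (x - y) = \<omega> z x - \<omega> z y"
  "\<omega> (c *\<^sub>R x) z = c * \<omega> x z" "\<omega> z (c *\<^sub>R x) = c * \<omega> z x"
  "\<omega> (- x) z = - \<omega> x z" "\<omega> z (- x) = - \<omega> z x"
  using bilinear_omega by (simp_all add: bilinear_ladd bilinear_radd bilinear_lsub bilinear_rsub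
     bilinear_lmul bilinear_rmul bilinear_lneg bilinear_rneg)

lemma E_eq: "E = {x. J *v x = \<i> *s x}"
  using cx_structure by (simp add: associated_cx_structure_def J_def)

lemma J_cvec: "J *v cvec X = cvec (j *v X)"
  by (simp add: J_def cmat_cvec)

lemma J_J: "J *v (J *v z) = - z"
proof -
  have jj: "j ** j = - mat 1"
    using cx_structure by (simp add: associated_cx_structure_def)
  have "J ** J = mat (-1)"
    unfolding J_def cmat_mult[symmetric] jj cmat_uminus cmat_mat by (simp add: mat_def vec_eq_iff)
  then show ?thesis by (simp add: matrix_vector_mul_assoc mat_smult)
qed

lemma j_j: "j *v (j *v X) = - X"
  using J_J[of "cvec X"] by (simp add: J_cvec cvec_uminus cvec_inj)

lemma mconj_J: "mconj J = J"
  by (simp add: J_def mconj_cmat)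

lemma vconj_J: "vconj (J *v z) = J *v vconj z"
  by (simp add: J_def vconj_cmat)

lemma E_subspace: "subspace E"
  and E_smult: "x \<in> E \<Longrightarrow> c *s x \<in> E"
  and E_lagrangian: "x \<in> E \<Longrightarrow> y \<in> E \<Longrightarrow> omegaC \<omega> x y = 0"
  and E_positive: "x \<in> E \<Longrightarrow> x \<noteq> 0 \<Longrightarrow> 0 < Re (herm \<omega> x x)"
  using polarization unfolding positive_polarization_def by blast+

lemma E_diff: "x \<in> E \<Longrightarrow> y \<in> E \<Longrightarrow> x - y \<in> E"
  using E_subspace subspace_diff by blast

lemma E_zero: "0 \<in> E"
  using E_subspace subspace_0 by blast

lemma PE_vec: "PE *v z = (1/2) *s (z - \<i> *s (J *v z))"
  by (simp add: PE_def matrix_vector_mul_assoc[symmetric] matrix_vector_mult_diff_rdistrib mat_smult)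

lemma PF_vec: "PF *v z = (1/2) *s (z + \<i> *s (J *v z))"
  by (simp add: PF_def matrix_vector_mul_assoc[symmetric] matrix_vector_mult_add_rdistrib mat_smult)

lemma PE_in_E: "PE *v z \<in> E"
  unfolding E_eq PE_vec
  by (simp add: vector_scalar_commute matrix_vector_mult_diff_distrib J_J vec_eq_iff algebra_simps)

lemma PE_plus_PF_vec: "PE *v z + PF *v z = z"
  unfolding PE_vec PF_vec by (simp add: vec_eq_iff algebra_simps)

lemma PE_plus_PF: "PE + PF = mat 1"
  unfolding matrix_eq by (simp add: matrix_vector_mult_add_rdistrib PE_plus_PF_vec)

lemma PE_on_E: "x \<in> E \<Longrightarrow> PE *v x = x"
  and PF_on_E: "x \<in> E \<Longrightarrow> PF *v x = 0"
  and PE_on_F: "x \<in> F \<Longrightarrow> PE *v x = 0"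
  and PF_on_F: "x \<in> F \<Longrightarrow> PF *v x = x"
  unfolding PE_vec PF_vec E_eq F_def by (simp_all add: vec_eq_iff algebra_simps)

lemma vconj_E: "x \<in> E \<Longrightarrow> vconj x \<in> F"
  unfolding E_eq F_def by (simp add: vconj_J[symmetric] vconj_smult vconj_uminus)

lemma PF_vconj: "PF *v z = vconj (PE *v vconj z)"
  unfolding PE_vec PF_vec by (simp add: vconj_smult vconj_diff vconj_J)

lemma mconj_PE: "mconj PE = PF"
  unfolding PE_def PF_def mconj_mult mconj_diff mconj_mat mconj_J by (simp add: mat_uminus_mult)

lemma mconj_PF: "mconj PF = PE"
  by (metis mconj_PE mconj_mconj)

text \<open>Since every vector splits as e + conj e' with e, e' in E, a matrix is determined by its
  action on E and on conj E.\<close>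

lemma matrix_eq_on_E_vconj_E:
  assumes "\<And>x. x \<in> E \<Longrightarrow> M *v x = N *v x" "\<And>x. x \<in> E \<Longrightarrow> M *v vconj x = N *v vconj x"
  shows "M = N"
proof -
  have "M *v z = N *v z" for z
  proof -
    have "z = PE *v z + vconj (PE *v vconj z)" using PE_plus_PF_vec[of z] PF_vconj by simp
    then have "M *v z = M *v (PE *v z) + M *v vconj (PE *v vconj z)"
      "N *v z = N *v (PE *v z) + N *v vconj (PE *v vconj z)"
      by (metis matrix_vector_right_distrib)+
    then show ?thesis using assms PE_in_E by simp
  qed
  then show ?thesis by (simp add: matrix_eq)
qed

lemma commute_J_PE:
  assumes "P ** J = J ** P"
  shows "P ** PE = PE ** P"
proof -
  have "P *v (J *v z) = J *v (P *v z)" for z by (simp add: matrix_vector_mul_assoc assms)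
  then show ?thesis
    by (simp add: matrix_eq matrix_vector_mul_assoc[symmetric] PE_vec vector_scalar_commute
        matrix_vector_mult_diff_distrib)
qed

lemma commute_J_preserves_F:
  assumes "P ** J = J ** P" "x \<in> F"
  shows "P *v x \<in> F"
proof -
  have "J *v (P *v x) = P *v (J *v x)" by (simp add: matrix_vector_mul_assoc assms)
  then show ?thesis using assms(2) unfolding F_def by (simp add: vector_scalar_commute matrix_vector_uminus)
qed

lemma commute_J_mconj: "P ** J = J ** P \<Longrightarrow> mconj P ** J = J ** mconj P"
  by (metis mconj_J mconj_mult)

subsection \<open>Step (1): the metric \<open>\<omega>(X, jY)\<close>\<close>

definition jmetric :: "real^'n \<Rightarrow> real^'n \<Rightarrow> real" where "jmetric X Y = \<omega> X (j *v Y)"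

lemma omegaC_cvec_comb:
  "omegaC \<omega> (a *s cvec X + b *s cvec Y) (c *s cvec Z + d *s cvec W) =
     a*c* of_real (\<omega> X Z) + a*d* of_real (\<omega> X W) + b*c* of_real (\<omega> Y Z) + b*d* of_real (\<omega> Y W)"
  by (simp add: omegaC_add1 omegaC_add2 omegaC_smult1 omegaC_smult2 omegaC_cvec[OF bilinear_omega]
      algebra_simps)

lemma PE_cvec: "PE *v cvec X = (1/2) *s cvec X + (- \<i>/2) *s cvec (j *v X)"
  unfolding PE_vec J_cvec by (simp add: vec_eq_iff algebra_simps)

lemma vconj_PE_cvec: "vconj (PE *v cvec X) = (1/2) *s cvec X + (\<i>/2) *s cvec (j *v X)"
  unfolding PE_cvec by (simp add: vconj_add vconj_diff vconj_smult vconj_cvec)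

text \<open>E is Lagrangian: the real and imaginary parts of \<open>\<omega>(PE X, PE Y) = 0\<close> say that
  j is symplectic and that \<open>\<omega>(X, jY)\<close> is symmetric.\<close>

lemma omega_PE_cvec:
  "(1/2)*(1/2)* of_real (\<omega> X Y) + (1/2)*(-\<i>/2)* of_real (\<omega> X (j *v Y))
   + (-\<i>/2)*(1/2)* of_real (\<omega> (j *v X) Y) + (-\<i>/2)*(-\<i>/2)* of_real (\<omega> (j *v X) (j *v Y)) = 0"
  using E_lagrangian[OF PE_in_E[of "cvec X"] PE_in_E[of "cvec Y"]] unfolding PE_cvec omegaC_cvec_comb .

lemma j_symplectic: "\<omega> (j *v X) (j *v Y) = \<omega> X Y"
  using arg_cong[OF omega_PE_cvec[of X Y], of Re] by simp

lemma omega_j_swap: "\<omega> X (j *v Y) = - \<omega> (j *v X) Y"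
  using arg_cong[OF omega_PE_cvec[of X Y], of Im] by simp

lemma herm_PE_cvec:
  "herm \<omega> (PE *v cvec X) (PE *v cvec Y) = of_real (jmetric X Y)/2 - \<i> * of_real (\<omega> X Y)/2"
proof -
  have "herm \<omega> (PE *v cvec X) (PE *v cvec Y) =
    ((1/2)*(1/2)* of_real (\<omega> X Y) + (1/2)*(\<i>/2)* of_real (\<omega> X (j *v Y))
     + (-\<i>/2)*(1/2)* of_real (\<omega> (j *v X) Y) + (-\<i>/2)*(\<i>/2)* of_real (\<omega> (j *v X) (j *v Y))) / \<i>"
    unfolding herm_def vconj_PE_cvec unfolding PE_cvec omegaC_cvec_comb ..
  also have "\<dots> = of_real (jmetric X Y)/2 - \<i> * of_real (\<omega> X Y)/2"
    unfolding j_symplectic jmetric_def omega_j_swap[of X Y] by (simp add: field_simps)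
  finally show ?thesis .
qed

lemma cvec_split: "cvec X = PE *v cvec X + vconj (PE *v cvec X)"
  using PE_plus_PF_vec[of "cvec X"] PF_vconj[of "cvec X"] by (simp add: vconj_cvec)

lemma PE_cvec_eq_0: "PE *v cvec X = 0 \<Longrightarrow> X = 0"
  using cvec_split[of X] by (metis add_0 cvec_0 cvec_inj vconj_zero)

lemma jmetric_pos:
  assumes "X \<noteq> 0"
  shows "0 < jmetric X X"
proof -
  have "PE *v cvec X \<noteq> 0" using assms PE_cvec_eq_0 by blast
  then have "0 < Re (herm \<omega> (PE *v cvec X) (PE *v cvec X))" using E_positive PE_in_E by blast
  then show ?thesis unfolding herm_PE_cvec omega_self by simp
qed

lemma jmetric_nonneg: "0 \<le> jmetric X X"
  using jmetric_pos[of X] by (cases "X = 0") (simp_all add: jmetric_def omega_self)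

lemma jmetric_sym: "jmetric X Y = jmetric Y X"
  unfolding jmetric_def using omega_j_swap[of X Y] omega_skew[of "j *v X" Y] by simp

lemma bilinear_jmetric: "bilinear jmetric"
proof -
  have "linear (\<lambda>Y. \<omega> X (j *v Y))" for X
    using linear_compose[of "(*v) j" "\<omega> X"] bilinear_omega unfolding bilinear_def by (simp add: o_def)
  moreover have "linear (\<lambda>X. \<omega> X (j *v Y))" for Y
    using bilinear_omega unfolding bilinear_def by simp
  ultimately show ?thesis unfolding bilinear_def jmetric_def by simp
qed

lemma jmetric_algebra:
  "jmetric (c *\<^sub>R x) y = c * jmetric x y" "jmetric x (c *\<^sub>R y) = c * jmetric x y"
  using bilinear_jmetric by (simp_all add: bilinear_lmul bilinear_rmul)

lemma jmetric_j: "jmetric (j *v X) Y = jmetric X ((- j) *v Y)"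
  unfolding jmetric_def by (simp add: j_symplectic j_j matrix_uminus_vector matrix_vector_uminus)

definition Gram :: "real^'n^'n" where "Gram = (\<chi> i k. jmetric (axis i 1) (axis k 1))"

definition adj :: "complex^'n^'n \<Rightarrow> complex^'n^'n" where
  "adj M = cmat (matrix_inv Gram) ** transpose (mconj M) ** cmat Gram"

lemma jmetric_Gram: "jmetric X Y = X \<bullet> (Gram *v Y)"
  unfolding bilinear_coordinates[OF bilinear_jmetric, of X Y]
  by (simp add: inner_vec_def matrix_vector_mult_def Gram_def sum_distrib_left mult_ac)

lemma invertible_Gram: "invertible Gram"
proof (rule invertible_if_trivial_kernel)
  fix X assume "Gram *v X = 0"
  then have "jmetric X X = 0" by (simp add: jmetric_Gram)
  then show "X = 0" using jmetric_pos by force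
qed

lemma cmat_Gram_inv: "cmat Gram ** cmat (matrix_inv Gram) = mat 1" "cmat (matrix_inv Gram) ** cmat Gram = mat 1"
  using matrix_inv_props[OF invertible_Gram] by (simp_all add: cmat_mult[symmetric] cmat_mat)

lemma adj_of_real:
  assumes "\<And>X Y. jmetric (R *v X) Y = jmetric X (S *v Y)"
  shows "adj (cmat R) = cmat S"
proof -
  have "(transpose R ** Gram) *v Y = (Gram ** S) *v Y" for Y
  proof -
    have "X \<bullet> ((transpose R ** Gram) *v Y) = X \<bullet> ((Gram ** S) *v Y)" for X
    proof -
      have "X \<bullet> ((transpose R ** Gram) *v Y) = (X v* transpose R) \<bullet> (Gram *v Y)"
        by (simp only: matrix_vector_mul_assoc[symmetric] dot_lmul_matrix)
      also have "\<dots> = jmetric X (S *v Y)" using assms by (simp add: jmetric_Gram)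
      also have "\<dots> = X \<bullet> ((Gram ** S) *v Y)" by (simp add: jmetric_Gram matrix_vector_mul_assoc)
      finally show ?thesis .
    qed
    then show ?thesis using vector_eq_ldot by blast
  qed
  then have "transpose R ** Gram = Gram ** S" by (simp add: matrix_eq)
  then have "matrix_inv Gram ** transpose R ** Gram = S"
    using matrix_inv_props[OF invertible_Gram] by (metis matrix_mul_assoc matrix_mul_lid)
  then show ?thesis unfolding adj_def mconj_cmat transpose_cmat cmat_mult[symmetric] by simp
qed

lemma adj_add: "adj (M + N) = adj M + adj N"
  by (simp add: adj_def mconj_add transpose_add matrix_add_ldistrib matrix_add_rdistrib)

lemma adj_diff: "adj (M - N) = adj M - adj N"
  by (simp add: adj_def mconj_diff transpose_diff matrix_diff_ldistrib matrix_diff_rdistrib)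

lemma adj_mult: "adj (M ** N) = adj N ** adj M"
proof -
  have "adj N ** adj M = (cmat (matrix_inv Gram) ** transpose (mconj N) ** cmat Gram)
      ** (cmat (matrix_inv Gram) ** (transpose (mconj M) ** cmat Gram))"
    by (simp add: adj_def matrix_mul_assoc)
  also have "\<dots> = cmat (matrix_inv Gram) ** transpose (mconj N) ** (transpose (mconj M) ** cmat Gram)"
    by (rule matrix_mult_cancel, rule cmat_Gram_inv(1))
  also have "\<dots> = adj (M ** N)"
    by (simp add: adj_def mconj_mult matrix_transpose_mul matrix_mul_assoc)
  finally show ?thesis by simp
qed

lemma adj_mat: "adj (mat c) = mat (cnj c)"
proof -
  have "adj (mat c) = mat (cnj c) ** (cmat (matrix_inv Gram) ** cmat Gram)"
    by (simp add: adj_def mconj_mat mat_comm matrix_mul_assoc)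
  then show ?thesis by (simp add: cmat_Gram_inv)
qed

lemma det_adj: "det (adj M) = cnj (det M)"
proof -
  have "det (cmat (matrix_inv Gram)) * det (cmat Gram) = 1"
    using cmat_Gram_inv(2) det_mul by (metis det_I)
  then show ?thesis by (simp add: adj_def det_mul det_mconj)
qed

lemma adj_J: "adj J = - J"
  using adj_of_real[OF jmetric_j] by (simp add: J_def cmat_uminus)

lemma adj_PE: "adj PE = PE"
proof -
  have "adj PE = (mat 1 - (- J) ** mat (- \<i>)) ** mat (1/2)"
    by (simp only: PE_def adj_mult adj_diff adj_mat adj_J complex_cnj_one complex_cnj_i
        complex_cnj_divide complex_cnj_numeral)
  then show ?thesis by (simp only: uminus_mult_mat_uminus mat_comm PE_def)
qed

lemma adj_PF: "adj PF = PF"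
proof -
  have "PF = mat 1 - PE" using PE_plus_PF by (simp add: algebra_simps)
  then show ?thesis using adj_diff[of "mat 1" PE] by (simp add: adj_PE adj_mat)
qed

subsection \<open>Step (2): determinants on E\<close>

definition ext_E :: "complex^'n^'n \<Rightarrow> complex^'n^'n" where "ext_E P = P ** PE + PF"
definition ext_F :: "complex^'n^'n \<Rightarrow> complex^'n^'n" where "ext_F P = P ** PF + PE"

definition det_E :: "complex^'n^'n \<Rightarrow> complex" where "det_E P = det (ext_E P)"

lemma ext_E_on_E: "x \<in> E \<Longrightarrow> ext_E P *v x = P *v x"
  and ext_E_on_F: "x \<in> F \<Longrightarrow> ext_E P *v x = x"
  by (simp_all add: ext_E_def matrix_vector_mult_add_rdistrib matrix_vector_mul_assoc[symmetric]
      PE_on_E PF_on_E PE_on_F PF_on_F)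

lemma ext_E_ext_F:
  assumes "P ** J = J ** P"
  shows "ext_E P ** ext_F P = P"
proof (rule matrix_eq_on_E_vconj_E)
  fix x assume x: "x \<in> E"
  show "(ext_E P ** ext_F P) *v x = P *v x"
    by (simp add: ext_E_def ext_F_def matrix_vector_mul_assoc[symmetric]
        matrix_vector_mult_add_rdistrib PE_on_E PF_on_E x)
  have "vconj x \<in> F" "P *v vconj x \<in> F"
    using vconj_E[OF x] commute_J_preserves_F[OF assms] by auto
  then show "(ext_E P ** ext_F P) *v vconj x = P *v vconj x"
    by (simp add: ext_E_def ext_F_def matrix_vector_mul_assoc[symmetric]
        matrix_vector_mult_add_rdistrib PE_on_F PF_on_F)
qed

lemma mconj_ext_E: "mconj (ext_E Q) = ext_F (mconj Q)"
  by (simp add: ext_E_def ext_F_def mconj_add mconj_mult mconj_PE mconj_PF)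

text \<open>Key fact of step (2): for P commuting with J whose adjoint is its conjugate,
  the E-part and the F-part of P have conjugate determinants, and these multiply to det P.\<close>

lemma det_E_mconj_det_square:
  assumes adj_P: "adj P = mconj P" and comm: "P ** J = J ** P"
  shows "det_E (mconj P) = cnj (det_E P)" and "det P = det_E P ^ 2"
proof -
  have "adj (ext_E P) = PE ** mconj P + PF"
    by (simp add: ext_E_def adj_add adj_mult adj_PE adj_PF adj_P)
  also have "\<dots> = ext_E (mconj P)"
    using commute_J_PE[OF commute_J_mconj[OF comm]] by (simp add: ext_E_def)
  finally show c: "det_E (mconj P) = cnj (det_E P)"
    using det_adj[of "ext_E P"] by (simp add: det_E_def)
  have "det (ext_F P) = det_E P"
    using c mconj_ext_E[of "mconj P"] det_mconj[of "ext_E (mconj P)"] by (simp add: det_E_def)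
  then show "det P = det_E P ^ 2"
    using ext_E_ext_F[OF comm] det_mul[of "ext_E P" "ext_F P"]
    by (simp add: det_E_def power2_eq_square)
qed

lemma det_on_eq_det_E:
  assumes M: "\<And>x. x \<in> E \<Longrightarrow> M *v x = f x"
  shows "det_on E f = det_E M"
proof -
  let ?P = "\<lambda>N. (\<forall>x\<in>E. N *v x = f x) \<and> (\<forall>x\<in>E. N *v vconj x = vconj x)"
  have P: "?P (ext_E M)"
    using M ext_E_on_E ext_E_on_F vconj_E by simp
  have "(THE N. ?P N) = ext_E M"
  proof (rule the_equality)
    show "\<And>N. ?P N \<Longrightarrow> N = ext_E M"
      using P by (intro matrix_eq_on_E_vconj_E) auto
  qed (rule P)
  then show ?thesis by (simp add: det_on_def det_E_def)
qed

subsection \<open>Step (3): the square root \<open>det\<^sup>1\<^sup>/\<^sup>2(1/2 + iB)\<close>\<close>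

lemma half_plus_iA_eq: "half_plus_iA B = mat (1/2) + mat \<i> ** cmat B"
  unfolding mat_mult_left by (simp add: half_plus_iA_def vec_eq_iff mat_def cmat_def)

lemma half_plus_iA_0: "half_plus_iA 0 = mat (1/2)"
  by (simp add: half_plus_iA_def mat_def vec_eq_iff)

lemma sym_SJ_subspace: "subspace (sym_SJ \<omega> j)"
  unfolding subspace_def sym_SJ_def
  by (simp add: matrix_vector_mult_add_rdistrib scaleR_matrix_vector_assoc[symmetric] omega_algebra
      matrix_vector_right_distrib matrix_vector_mult_scaleR
      bilinear_lzero[OF bilinear_omega] bilinear_rzero[OF bilinear_omega])

lemma zero_in_sym_SJ: "0 \<in> sym_SJ \<omega> j"
  using sym_SJ_subspace subspace_0 by blast

lemma scale_in_sym_SJ: "B \<in> sym_SJ \<omega> j \<Longrightarrow> t *\<^sub>R B \<in> sym_SJ \<omega> j"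
  using sym_SJ_subspace by (simp add: subspace_scale)

lemma sym_SJ_jmetric: "B \<in> sym_SJ \<omega> j \<Longrightarrow> jmetric (B *v X) Y = jmetric X (B *v Y)"
  unfolding sym_SJ_def jmetric_def by blast

lemma adj_half_plus_iA:
  assumes "B \<in> sym_SJ \<omega> j"
  shows "adj (half_plus_iA B) = mconj (half_plus_iA B)"
proof -
  have "adj (cmat B) = cmat B" by (rule adj_of_real, rule sym_SJ_jmetric[OF assms])
  then show ?thesis unfolding half_plus_iA_eq
    by (simp add: adj_add adj_mult adj_mat mconj_add mconj_mult mconj_mat mconj_cmat mat_comm)
qed

lemma half_plus_iA_commute_J:
  assumes "B ** j = j ** B"
  shows "half_plus_iA B ** J = J ** half_plus_iA B"
proof -
  have c: "cmat B ** J = J ** cmat B" using assms by (simp add: J_def cmat_mult[symmetric])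
  have "half_plus_iA B ** J = mat (1/2) ** J + mat \<i> ** (cmat B ** J)"
    by (simp add: half_plus_iA_eq matrix_add_rdistrib matrix_mul_assoc)
  also have "\<dots> = J ** mat (1/2) + (mat \<i> ** J) ** cmat B"
    by (simp only: c mat_comm[of "1/2" J] matrix_mul_assoc)
  also have "\<dots> = J ** half_plus_iA B"
    by (simp only: half_plus_iA_eq matrix_add_ldistrib matrix_mul_assoc mat_comm[of \<i> J])
  finally show ?thesis .
qed

text \<open>1/2 + iB is invertible for B in sym(S,j): if \<open>(1/2 + iB)(X + iY) = 0\<close> then
  \<open>X = 2BY\<close> and \<open>BX = -Y/2\<close>, so by symmetry of B, \<open>\<gamma>(X,X) + \<gamma>(Y,Y) = 0\<close>.\<close>

lemma det_half_plus_iA_nonzero: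
  assumes B: "B \<in> sym_SJ \<omega> j"
  shows "det (half_plus_iA B) \<noteq> 0"
proof -
  have "z = 0" if z: "half_plus_iA B *v z = 0" for z
  proof -
    define X where "X = (\<chi> i. Re (z $ i))"
    define Y where "Y = (\<chi> i. Im (z $ i))"
    have comp: "(half_plus_iA B *v z) $ i
        = z $ i / 2 + \<i> * (\<Sum>k\<in>UNIV. complex_of_real (B$i$k) * z$k)" for i
      by (simp add: half_plus_iA_eq matrix_vector_mult_add_rdistrib
          matrix_vector_mul_assoc[symmetric] mat_smult)
        (simp add: matrix_vector_mult_def cmat_def)
    have "Re ((half_plus_iA B *v z) $ i) = 0" "Im ((half_plus_iA B *v z) $ i) = 0" for i
      using z by simp_all
    then have "X $ i / 2 - (B *v Y) $ i = 0" "Y $ i / 2 + (B *v X) $ i = 0" for i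
      unfolding comp by (simp_all add: X_def Y_def matrix_vector_mult_def Re_sum Im_sum)
    then have X: "X = 2 *\<^sub>R (B *v Y)" and Y: "B *v X = - ((1/2) *\<^sub>R Y)"
      by (simp_all add: vec_eq_iff field_simps add_eq_0_iff)
    have "jmetric X X = 2 * jmetric Y (B *v X)"
      using sym_SJ_jmetric[OF B, of Y X] jmetric_sym by (subst (1) X) (simp add: jmetric_algebra)
    also have "\<dots> = - jmetric Y Y"
      unfolding Y using bilinear_jmetric by (simp add: bilinear_rneg jmetric_algebra)
    finally have "jmetric X X = 0" "jmetric Y Y = 0"
      using jmetric_nonneg[of X] jmetric_nonneg[of Y] by linarith+
    then have "X = 0" "Y = 0" using jmetric_pos by force+
    then show "z = 0" by (simp add: X_def Y_def vec_eq_iff complex_eq_iff)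
  qed
  then have "invertible (half_plus_iA B)"
    using matrix_left_invertible_ker invertible_left_inverse by blast
  then show ?thesis by (simp add: invertible_det_nz)
qed

text \<open>They have exactly one solution: a continuous
  square root exists because sym(S,j) is contractible and det(1/2 + iB) never vanishes, its sign is
  fixed at B = 0, and two such square roots agree along every segment from 0.\<close>

definition is_sqrt_det :: "(real^'n^'n \<Rightarrow> complex) \<Rightarrow> bool" where
  "is_sqrt_det f \<longleftrightarrow> continuous_on (sym_SJ \<omega> j) f
      \<and> (\<forall>B\<in>sym_SJ \<omega> j. (f B)^2 = det (half_plus_iA B))
      \<and> f 0 \<in> \<real> \<and> 0 < Re (f 0)
      \<and> (\<forall>B. B \<notin> sym_SJ \<omega> j \<longrightarrow> f B = 0)"

lemma det_half_plus_iA_0: "det (half_plus_iA (0::real^'n^'n)) = complex_of_real ((1/2) ^ CARD('n))"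
  by (simp add: half_plus_iA_0 det_diagonal mat_def)

lemma is_sqrt_det_exists: "\<exists>f. is_sqrt_det f"
proof -
  have "contractible (sym_SJ \<omega> j)"
    by (rule convex_imp_contractible[OF subspace_imp_convex[OF sym_SJ_subspace]])
  moreover have "continuous_on (sym_SJ \<omega> j) (\<lambda>B. det (half_plus_iA B))"
    by (rule continuous_on_det) (simp add: half_plus_iA_def continuous_intros)
  ultimately obtain r where r: "continuous_on (sym_SJ \<omega> j) r"
      "\<And>B. B \<in> sym_SJ \<omega> j \<Longrightarrow> det (half_plus_iA B) = (r B) ^ 2"
    using continuous_sqrt_on_contractible det_half_plus_iA_nonzero by blast
  have r0: "r 0 \<in> \<real>" "r 0 \<noteq> 0"
    using square_root_of_positive_real[of "r 0" "(1/2) ^ CARD('n)"] r(2)[OF zero_in_sym_SJ]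
    by (simp_all add: det_half_plus_iA_0)
  then have "Re (r 0) \<noteq> 0" by (metis complex_eq_iff complex_is_Real_iff zero_complex.simps)
  define s :: real where "s = (if Re (r 0) > 0 then 1 else -1)"
  define f where "f B = (if B \<in> sym_SJ \<omega> j then complex_of_real s * r B else 0)" for B
  have "continuous_on (sym_SJ \<omega> j) f"
    using continuous_on_cong[of "sym_SJ \<omega> j" "sym_SJ \<omega> j" f "\<lambda>B. complex_of_real s * r B"]
      continuous_on_mult[OF continuous_on_const r(1)] f_def by simp
  moreover have "(complex_of_real s)^2 = 1" by (simp add: s_def)
  then have "\<forall>B\<in>sym_SJ \<omega> j. (f B)^2 = det (half_plus_iA B)"
    using r(2) by (simp add: f_def power_mult_distrib)
  moreover have "f 0 \<in> \<real>" "0 < Re (f 0)"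
    using r0 \<open>Re (r 0) \<noteq> 0\<close> zero_in_sym_SJ by (simp_all add: f_def s_def)
  moreover have "\<forall>B. B \<notin> sym_SJ \<omega> j \<longrightarrow> f B = 0" by (simp add: f_def)
  ultimately show ?thesis unfolding is_sqrt_det_def by blast
qed

lemma continuous_on_segment:
  assumes "B \<in> sym_SJ \<omega> j" "continuous_on (sym_SJ \<omega> j) f"
  shows "continuous_on {0..1} (\<lambda>t::real. f (t *\<^sub>R B))"
proof (rule continuous_on_compose2[OF assms(2)])
  show "continuous_on {0..1} (\<lambda>t::real. t *\<^sub>R B)"
    by (intro continuous_intros)
qed (use scale_in_sym_SJ[OF assms(1)] in blast)

lemma is_sqrt_det_unique:
  assumes f1: "is_sqrt_det f1" and f2: "is_sqrt_det f2"
  shows "f1 = f2"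
proof
  fix B
  show "f1 B = f2 B"
  proof (cases "B \<in> sym_SJ \<omega> j")
    case False then show ?thesis using f1 f2 by (simp add: is_sqrt_det_def)
  next
    case True
    have sq: "f1 (t *\<^sub>R B) ^ 2 = f2 (t *\<^sub>R B) ^ 2" "f2 (t *\<^sub>R B) ^ 2 \<noteq> 0" for t
      using f1 f2 scale_in_sym_SJ[OF True, of t] det_half_plus_iA_nonzero[of "t *\<^sub>R B"]
      by (simp_all add: is_sqrt_det_def)
    have "f1 0 = f2 0"
      using square_eq_pos_re[of "f1 0" "f2 0"] sq(1)[of 0] f1 f2 by (simp add: is_sqrt_det_def)
    moreover have "continuous_on (sym_SJ \<omega> j) f1" "continuous_on (sym_SJ \<omega> j) f2"
      using f1 f2 by (simp_all add: is_sqrt_det_def)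
    ultimately have "f1 (1 *\<^sub>R B) = f2 (1 *\<^sub>R B)"
      using square_roots_agree_on_path[OF continuous_on_segment[OF True] continuous_on_segment[OF True]]
        sq by simp
    then show ?thesis by simp
  qed
qed

lemma is_sqrt_det_sqrt_det: "is_sqrt_det (sqrt_det \<omega> j)"
proof -
  have "is_sqrt_det (THE f. is_sqrt_det f)"
    using theI'[of is_sqrt_det] is_sqrt_det_exists is_sqrt_det_unique by blast
  then show ?thesis unfolding sqrt_det_def is_sqrt_det_def[abs_def] .
qed

text \<open>\<open>det_E\<close> of a real scalar is real (it equals its own conjugate) and nonzero for s \<noteq> 0;
  as it is 1 at s = 1, it is positive at s = 1/2 by the intermediate value theorem.\<close>

lemma det_E_half_pos: "0 < Re (det_E (mat (1/2)))"
proof -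
  let ?r = "\<lambda>s::real. det_E (mat (complex_of_real s))"
  have real: "Im (?r s) = 0" and nonzero: "s \<noteq> 0 \<Longrightarrow> ?r s \<noteq> 0" for s
  proof -
    have a: "adj (mat (complex_of_real s)) = mconj (mat (complex_of_real s))"
      by (simp add: adj_mat mconj_mat)
    have c: "mat (complex_of_real s) ** J = J ** mat (complex_of_real s)" by (rule mat_comm)
    have "cnj (?r s) = ?r s"
      using det_E_mconj_det_square(1)[OF a c] by (simp add: mconj_mat)
    then show "Im (?r s) = 0" by (metis Reals_cnj_iff complex_is_Real_iff)
    assume "s \<noteq> 0"
    then have "det (mat (complex_of_real s) :: complex^'n^'n) \<noteq> 0"
      by (simp add: det_diagonal mat_def)
    then show "?r s \<noteq> 0" using det_E_mconj_det_square(2)[OF a c] by auto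
  qed
  show ?thesis
  proof (rule ccontr)
    assume "\<not> 0 < Re (det_E (mat (1/2)))"
    then have "Re (?r (1/2)) \<le> 0" by simp
    moreover have "0 \<le> Re (?r 1)" by (simp add: det_E_def ext_E_def PE_plus_PF)
    moreover have "continuous_on {1/2..1} (\<lambda>s. Re (?r s))"
      unfolding det_E_def by (intro continuous_intros continuous_on_det)
        (simp add: ext_E_def mat_mult_left continuous_intros)
    ultimately obtain s where "1/2 \<le> s" "s \<le> 1" "Re (?r s) = 0"
      using IVT'[of "\<lambda>s. Re (?r s)" "1/2" 0 1] by auto
    then show False using real[of s] nonzero[of s] by (simp add: complex_eq_iff)
  qed
qed

theorem sqrt_det_eq_det_E:
  assumes B: "B \<in> sym_SJ \<omega> j" and comm: "B ** j = j ** B"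
  shows "sqrt_det \<omega> j B = det_E (half_plus_iA B)"
proof -
  let ?q = "\<lambda>t::real. det_E (half_plus_iA (t *\<^sub>R B))"
  have sq: "?q t ^ 2 = det (half_plus_iA (t *\<^sub>R B))" for t
  proof (rule det_E_mconj_det_square(2)[symmetric])
    show "adj (half_plus_iA (t *\<^sub>R B)) = mconj (half_plus_iA (t *\<^sub>R B))"
      by (rule adj_half_plus_iA[OF scale_in_sym_SJ[OF B]])
    show "half_plus_iA (t *\<^sub>R B) ** J = J ** half_plus_iA (t *\<^sub>R B)"
      using comm by (intro half_plus_iA_commute_J) (simp add: matrix_scalar_ac scalar_matrix_assoc[symmetric])
  qed
  have P: "is_sqrt_det (sqrt_det \<omega> j)" by (rule is_sqrt_det_sqrt_det)
  have "sqrt_det \<omega> j 0 = ?q 0"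
  proof (rule square_eq_pos_re)
    show "sqrt_det \<omega> j 0 ^ 2 = ?q 0 ^ 2" using P zero_in_sym_SJ sq[of 0] by (simp add: is_sqrt_det_def)
    show "0 < Re (sqrt_det \<omega> j 0)" using P by (simp add: is_sqrt_det_def)
    show "0 < Re (?q 0)" using det_E_half_pos by (simp add: half_plus_iA_0)
  qed
  moreover have "continuous_on {0..1} ?q"
    unfolding det_E_def by (rule continuous_on_det)
      (simp add: ext_E_def half_plus_iA_def matrix_matrix_mult_def continuous_intros)
  moreover have "sqrt_det \<omega> j (t *\<^sub>R B) ^ 2 = ?q t ^ 2" for t
    using P scale_in_sym_SJ[OF B] sq by (simp add: is_sqrt_det_def)
  moreover have "?q t \<noteq> 0" for t
    using sq[of t] det_half_plus_iA_nonzero[OF scale_in_sym_SJ[OF B]] by auto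
  moreover have "continuous_on {0..1} (\<lambda>t. sqrt_det \<omega> j (t *\<^sub>R B))"
    using P unfolding is_sqrt_det_def by (blast intro: continuous_on_segment[OF B])
  ultimately have "sqrt_det \<omega> j (1 *\<^sub>R B) = ?q 1"
    using square_roots_agree_on_path[of "\<lambda>t. sqrt_det \<omega> j (t *\<^sub>R B)" ?q] by simp
  then show ?thesis by simp
qed

end

section \<open>Step (4): the unitary h and \<open>g = \<iota>(h)\<close>\<close>

locale unitary_map = polarized_space +
  fixes h
  assumes unitary: "unitary_on \<omega> E h"
    and shift_bij: "bij_betw (\<lambda>x. h x - x) E E"
begin

lemma h_bij: "bij_betw h E E"
  and h_add: "x \<in> E \<Longrightarrow> y \<in> E \<Longrightarrow> h (x + y) = h x + h y"
  and h_smult: "x \<in> E \<Longrightarrow> h (c *s x) = c *s h x"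
  and h_herm: "x \<in> E \<Longrightarrow> y \<in> E \<Longrightarrow> herm \<omega> (h x) (h y) = herm \<omega> x y"
  using unitary by (simp_all add: unitary_on_def)

lemma h_in_E: "x \<in> E \<Longrightarrow> h x \<in> E"
  using h_bij bij_betwE by blast

lemma h_zero: "h 0 = 0"
  using h_smult[OF E_zero, of 0] by simp

lemma h_sum:
  "finite S \<Longrightarrow> (\<And>k. k \<in> S \<Longrightarrow> v k \<in> E) \<Longrightarrow>
    h (\<Sum>k\<in>S. c k *s v k) = (\<Sum>k\<in>S. c k *s h (v k))"
proof (induction S rule: finite_induct)
  case (insert a S)
  have "(\<Sum>k\<in>S. c k *s v k) \<in> E"
    using insert E_subspace E_smult by (intro subspace_sum) auto
  then show ?case using insert by (simp add: h_add E_smult h_smult)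
qed (simp add: h_zero)

definition "Hmat = (\<chi> i k. h (PE *v axis k 1) $ i)"

lemma Hmat_vec: "Hmat *v z = h (PE *v z)"
proof -
  have "h (PE *v z) = (\<Sum>k\<in>UNIV. z$k *s h (PE *v axis k 1))"
    using matrix_vector_sum_axis[of PE z] h_sum[of UNIV "\<lambda>k. PE *v axis k 1" "\<lambda>k. z$k"] PE_in_E
    by simp
  then show ?thesis
    by (simp add: vec_eq_iff Hmat_def matrix_vector_mult_def sum_component mult.commute)
qed

definition "represents_h g \<longleftrightarrow>
  (\<forall>x\<in>E. cmat g *v x = h x) \<and> (\<forall>x\<in>E. cmat g *v vconj x = vconj (h x))"

text \<open>\<open>Hmat PE + conj(Hmat) PF\<close> equals its own conjugate, so it is a real matrix representing h.\<close>

lemma represents_h_exists: "\<exists>g. represents_h g"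
proof -
  define M where "M = Hmat ** PE + mconj Hmat ** PF"
  have "mconj M = M"
    unfolding M_def mconj_add mconj_mult mconj_mconj mconj_PE mconj_PF by (simp add: add.commute)
  then have "cnj (M $ i $ k) = M $ i $ k" for i k
    by (metis mconj_def vec_lambda_beta)
  then have "Im (M $ i $ k) = 0" for i k
    by (metis Reals_cnj_iff complex_is_Real_iff)
  then have real_M: "cmat (\<chi> i k. Re (M $ i $ k)) = M"
    by (simp add: cmat_def vec_eq_iff complex_eq_iff)
  have "represents_h (\<chi> i k. Re (M $ i $ k))"
    unfolding represents_h_def real_M
    by (simp add: M_def matrix_vector_mult_add_rdistrib matrix_vector_mul_assoc[symmetric] PE_on_E PF_on_E
        PE_on_F PF_on_F vconj_E Hmat_vec mconj_vconj h_zero)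
  then show ?thesis ..
qed

definition "g = iota E h"
definition "G = cmat g"

lemma represents_h_unique: "represents_h g1 \<Longrightarrow> represents_h g2 \<Longrightarrow> g1 = g2"
  unfolding represents_h_def by (intro cmat_inj matrix_eq_on_E_vconj_E) auto

lemma represents_h_g: "represents_h g"
proof -
  have "\<exists>!g. represents_h g"
    using represents_h_exists represents_h_unique by blast
  then show ?thesis unfolding g_def iota_def represents_h_def[symmetric] by (rule theI')
qed

lemma G_on_E: "x \<in> E \<Longrightarrow> G *v x = h x"
  and G_on_vconj_E: "x \<in> E \<Longrightarrow> G *v vconj x = vconj (h x)"
  using represents_h_g by (simp_all add: represents_h_def G_def)

lemma G_commute_J: "G ** J = J ** G"
proof (rule matrix_eq_on_E_vconj_E)
  fix x assume x: "x \<in> E"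
  then have "J *v x = \<i> *s x" "J *v h x = \<i> *s h x" using h_in_E E_eq by blast+
  then show "(G ** J) *v x = (J ** G) *v x"
    by (simp add: matrix_vector_mul_assoc[symmetric] G_on_E x vector_scalar_commute)
  have "J *v vconj x = - \<i> *s vconj x" "J *v vconj (h x) = - \<i> *s vconj (h x)"
    using vconj_E[OF x] vconj_E[OF h_in_E[OF x]] F_def by blast+
  then show "(G ** J) *v vconj x = (J ** G) *v vconj x"
    by (simp add: matrix_vector_mul_assoc[symmetric] G_on_vconj_E x vector_scalar_commute
        matrix_vector_uminus)
qed

lemma g_commute_j: "g ** j = j ** g"
  using G_commute_J unfolding G_def J_def cmat_mult[symmetric] by (rule cmat_inj)

lemma h_PE_cvec: "h (PE *v cvec X) = PE *v cvec (g *v X)"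
proof -
  have "h (PE *v cvec X) = G *v (PE *v cvec X)" by (simp add: G_on_E PE_in_E)
  also have "\<dots> = PE *v (G *v cvec X)"
    using commute_J_PE[OF G_commute_J] by (simp add: matrix_vector_mul_assoc)
  finally show ?thesis by (simp add: G_def cmat_cvec)
qed

text \<open>Since h is unitary, g preserves \<omega> (the imaginary part of the Hermitian product).\<close>

lemma g_symplectic: "\<omega> (g *v X) (g *v Y) = \<omega> X Y"
  using arg_cong[OF h_herm[OF PE_in_E PE_in_E, of "cvec X" "cvec Y"], of Im]
  unfolding h_PE_cvec herm_PE_cvec by simp

text \<open>A vector fixed by g gives a vector of E fixed by h, hence 1 - g is injective; likewise
  g is injective.\<close>

lemma invertible_one_minus_g: "invertible (mat 1 - g)"
proof (rule invertible_if_trivial_kernel)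
  fix X assume "(mat 1 - g) *v X = 0"
  then have "h (PE *v cvec X) - PE *v cvec X = h 0 - 0"
    using h_PE_cvec h_zero by (simp add: matrix_vector_mult_diff_rdistrib)
  moreover have "inj_on (\<lambda>x. h x - x) E" using shift_bij bij_betw_def by blast
  ultimately have "PE *v cvec X = 0" using PE_in_E E_zero by (simp add: inj_on_def)
  then show "X = 0" by (rule PE_cvec_eq_0)
qed

lemma invertible_g: "invertible g"
proof (rule invertible_if_trivial_kernel)
  fix X assume "g *v X = 0"
  then have "h (PE *v cvec X) = h 0" using h_PE_cvec h_zero by (simp add: matrix_vector_mult_0_right)
  then have "PE *v cvec X = 0"
    using h_bij PE_in_E E_zero by (simp add: bij_betw_def inj_on_def)
  then show "X = 0" by (rule PE_cvec_eq_0)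
qed

definition "K = matrix_inv (mat 1 - g)"
definition "A = A_of j g"

lemma K_inverse: "K ** (mat 1 - g) = mat 1" "(mat 1 - g) ** K = mat 1"
  using matrix_inv_props[OF invertible_one_minus_g] by (simp_all add: K_def)

lemma A_eq: "A = (1/2) *\<^sub>R ((mat 1 + g) ** K ** j)"
  by (simp add: A_def A_of_def K_def)

text \<open>A is symmetric for the metric: writing \<open>jX = (1 - g)a\<close> and \<open>jY = (1 - g)b\<close>, both
  \<open>\<gamma>(AX, Y)\<close> and \<open>\<gamma>(X, AY)\<close> reduce to \<open>\<omega>(a, b) - \<omega>(ga, gb)\<close> up to symmetric terms.\<close>

lemma A_in_sym_SJ: "A \<in> sym_SJ \<omega> j"
proof -
  have "jmetric (A *v X) Y = jmetric X (A *v Y)" for X Y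
  proof -
    define a where "a = K *v (j *v X)"
    define b where "b = K *v (j *v Y)"
    have ja: "j *v X = (mat 1 - g) *v a" and jb: "j *v Y = (mat 1 - g) *v b"
      unfolding a_def b_def by (simp_all add: matrix_vector_mul_assoc matrix_mul_assoc K_inverse)
    have X: "X = - (j *v ((mat 1 - g) *v a))" using j_j[of X] ja by simp
    have AX: "A *v X = (1/2) *\<^sub>R ((mat 1 + g) *v a)" and AY: "A *v Y = (1/2) *\<^sub>R ((mat 1 + g) *v b)"
      unfolding A_eq a_def b_def
      by (simp_all add: scaleR_matrix_vector_assoc[symmetric] matrix_vector_mul_assoc matrix_mul_assoc)
    have "jmetric (A *v X) Y = \<omega> ((1/2) *\<^sub>R (a + g *v a)) (b - g *v b)"
      unfolding jmetric_def AX jb by (simp add: matrix_vector_mult_add_rdistrib matrix_vector_mult_diff_rdistrib)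
    moreover have "jmetric X (A *v Y) = - \<omega> (a - g *v a) ((1/2) *\<^sub>R (b + g *v b))"
      unfolding jmetric_def AY
      by (subst X) (simp add: omega_algebra j_symplectic matrix_vector_mult_add_rdistrib
          matrix_vector_mult_diff_rdistrib)
    ultimately show ?thesis
      by (simp add: omega_algebra g_symplectic omega_skew[of "g *v b" a] omega_skew[of b "g *v a"]
          algebra_simps)
  qed
  then show ?thesis unfolding sym_SJ_def jmetric_def by blast
qed

lemma A_commute_j: "A ** j = j ** A"
proof -
  have c: "(mat 1 - g) ** j = j ** (mat 1 - g)" "(mat 1 + g) ** j = j ** (mat 1 + g)"
    by (simp_all add: matrix_diff_rdistrib matrix_diff_ldistrib matrix_add_rdistrib
        matrix_add_ldistrib g_commute_j)
  have "K ** j = K ** j ** ((mat 1 - g) ** K)" by (simp add: K_inverse)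
  also have "\<dots> = (K ** (mat 1 - g)) ** j ** K" by (metis c(1) matrix_mul_assoc)
  finally have Kj: "K ** j = j ** K" by (simp add: K_inverse)
  have "(mat 1 + g) ** K ** j ** j = j ** ((mat 1 + g) ** K ** j)"
    by (metis Kj c(2) matrix_mul_assoc)
  then show ?thesis unfolding A_eq by (simp add: scalar_matrix_assoc[symmetric] matrix_scalar_ac)
qed

text \<open>On E, \<open>1/2 + iA\<close> acts as \<open>-GK\<close>, because J = i there.\<close>

lemma half_plus_iA_on_E:
  assumes y: "y \<in> E"
  shows "half_plus_iA A *v y = - (G *v (cmat K *v y))"
proof -
  define w where "w = cmat K *v y"
  have yw: "y = w - G *v w"
    using arg_cong[OF K_inverse(2), of "\<lambda>M. cmat M *v y"]
    by (simp add: w_def G_def cmat_mult cmat_diff cmat_mat matrix_vector_mul_assoc[symmetric]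
        matrix_vector_mult_diff_rdistrib)
  have Jy: "J *v y = \<i> *s y" using y E_eq by blast
  have "cmat A *v y = (1/2) *s ((mat 1 + G) *v (cmat K *v (J *v y)))"
    by (simp add: A_eq cmat_scaleR cmat_mult cmat_add cmat_mat G_def J_def
        matrix_vector_mul_assoc[symmetric] mat_smult)
  also have "\<dots> = (\<i>/2) *s (w + G *v w)"
    by (simp add: Jy vector_scalar_commute w_def matrix_vector_mult_add_rdistrib vec_eq_iff algebra_simps)
  finally have "half_plus_iA A *v y = (1/2) *s y + \<i> *s ((\<i>/2) *s (w + G *v w))"
    by (simp add: half_plus_iA_eq matrix_vector_mult_add_rdistrib matrix_vector_mul_assoc[symmetric]
        mat_smult)
  also have "\<dots> = - (G *v w)"
    by (subst yw) (simp add: vec_eq_iff algebra_simps)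
  finally show ?thesis by (simp add: w_def)
qed

text \<open>The map \<open>x \<mapsto> x - h\<^sup>-\<^sup>1 x\<close> on E is given by the matrix \<open>1 - g\<^sup>-\<^sup>1\<close>, and
  \<open>K (1 - g\<^sup>-\<^sup>1) = -g\<^sup>-\<^sup>1\<close>; hence \<open>1/2 + iA\<close> inverts it on E.\<close>

definition "N = mat 1 - cmat (matrix_inv g)"

lemma inv_h_on_E:
  assumes "x \<in> E"
  shows "inv_into E h x \<in> E" "h (inv_into E h x) = x"
proof -
  have "x \<in> h ` E" using h_bij assms by (simp add: bij_betw_def)
  then show "inv_into E h x \<in> E" "h (inv_into E h x) = x"
    by (simp_all add: inv_into_into f_inv_into_f)
qed

lemma N_on_E:
  assumes x: "x \<in> E"
  shows "N *v x = x - inv_into E h x"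
proof -
  note inv = inv_h_on_E[OF x]
  have "cmat (matrix_inv g) *v x = cmat (matrix_inv g ** g) *v inv_into E h x"
    using G_on_E[OF inv(1)] inv(2) by (simp add: G_def cmat_mult matrix_vector_mul_assoc[symmetric])
  then show ?thesis
    using matrix_inv_props[OF invertible_g] by (simp add: N_def cmat_mat matrix_vector_mult_diff_rdistrib)
qed

lemma N_in_E: "x \<in> E \<Longrightarrow> N *v x \<in> E"
  using N_on_E E_diff inv_h_on_E(1) by simp

lemma half_plus_iA_inverts_N: "x \<in> E \<Longrightarrow> half_plus_iA A *v (N *v x) = x"
proof -
  assume x: "x \<in> E"
  note NE = N_in_E[OF x]
  have "K ** (mat 1 - matrix_inv g) = - ((K ** (mat 1 - g)) ** matrix_inv g)"
    using matrix_inv_props[OF invertible_g]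
    by (simp add: matrix_diff_ldistrib matrix_diff_rdistrib matrix_mul_assoc[symmetric])
  then have "K ** (mat 1 - matrix_inv g) = - matrix_inv g"
    by (simp add: K_inverse)
  moreover have "cmat K ** N = cmat (K ** (mat 1 - matrix_inv g))"
    by (simp add: N_def cmat_mult cmat_diff cmat_mat)
  ultimately have KN: "cmat K ** N = - cmat (matrix_inv g)"
    by (simp add: cmat_uminus)
  have "half_plus_iA A *v (N *v x) = - (G *v ((cmat K ** N) *v x))"
    unfolding half_plus_iA_on_E[OF NE] by (simp add: matrix_vector_mul_assoc)
  also have "\<dots> = (G ** cmat (matrix_inv g)) *v x"
    by (simp add: KN matrix_uminus_vector matrix_vector_uminus matrix_vector_mul_assoc)
  also have "\<dots> = x"
    using matrix_inv_props[OF invertible_g] by (simp add: G_def cmat_mult[symmetric] cmat_mat)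
  finally show ?thesis .
qed

lemma det_E_half_plus_iA: "det_E (half_plus_iA A) = 1 / det_E N"
proof -
  have "ext_E (half_plus_iA A) ** ext_E N = mat 1"
  proof (rule matrix_eq_on_E_vconj_E)
    fix x assume x: "x \<in> E"
    then have "N *v x \<in> E" by (rule N_in_E)
    then show "(ext_E (half_plus_iA A) ** ext_E N) *v x = mat 1 *v x"
      by (simp add: matrix_vector_mul_assoc[symmetric] ext_E_on_E x half_plus_iA_inverts_N)
    show "(ext_E (half_plus_iA A) ** ext_E N) *v vconj x = mat 1 *v vconj x"
      by (simp add: matrix_vector_mul_assoc[symmetric] ext_E_on_F vconj_E x)
  qed
  then have "det_E (half_plus_iA A) * det_E N = 1" by (metis det_E_def det_I det_mul)
  then show ?thesis by (auto simp: eq_divide_eq)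
qed

end

theorem mainTheorem8:
  fixes \<omega> :: "real^'n \<Rightarrow> real^'n \<Rightarrow> real"
    and E :: "(complex^'n) set"
    and j :: "real^'n^'n"
    and h :: "complex^'n \<Rightarrow> complex^'n"
  assumes "symplectic_form \<omega>"
    and "positive_polarization \<omega> E"
    and "associated_cx_structure E j"
    and "unitary_on \<omega> E h"
    and "bij_betw (\<lambda>x. h x - x) E E"
  shows "sqrt_det \<omega> j (A_of j (iota E h)) = 1 / det_on E (\<lambda>x. x - inv_into E h x)"
proof -
  interpret unitary_map \<omega> E j h
    using assms by unfold_locales
  have "sqrt_det \<omega> j A = det_E (half_plus_iA A)"
    by (rule sqrt_det_eq_det_E[OF A_in_sym_SJ A_commute_j])
  moreover have "det_on E (\<lambda>x. x - inv_into E h x) = det_E N"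
    by (rule det_on_eq_det_E[OF N_on_E])
  ultimately show ?thesis
    using det_E_half_plus_iA by (simp add: A_def g_def)
qed

end
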